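(* Let $M,N,P$ be Banach manifolds, and let $h_M\colon M\to\mathbb R$ and $h_N\colon N\to\mathbb R$ be $C^\infty$ functions having $0$ as a regular value. Let $r\ge1$ and let $f_i\colon M\to N$ and $g_i\colon N\to P$, $i=1,2$, be $C^1$ maps such that $f_i(h_M^{-1}(0))\subseteq h_N^{-1}(0)$, $f_2=f_1+O(h_M^r)$, and $g_2=g_1+O(h_N^r)$. Then $g_2\circ f_2=g_1\circ f_1+O(h_M^r)$. Moreover, if $h_M(m)=0$ and $n\equiv f_i(m)$, then $$\operatorname{res}^r(g_2\circ f_2,g_1\circ f_1)(m)=\dot f_2(m)^r\,\operatorname{res}^r(g_2,g_1)(n)+T_ng_1\,\operatorname{res}^r(f_2,f_1)(m).$$
   Context: Order notation: for maps $f_1,f_2\colon M\to Q$ into a manifold $Q$ with $f_1=f_2$ on $h_M^{-1}(0)$ and $r\ge1$, write $f_2=f_1+O(h_M^r)$ if for every $m_0\in h_M^{-1}(0)$ there are a chart $\nu$ of $Q$ at $q_0=f_i(m_0)$ and a function $(\delta f)_\nu$ defined near $m_0$ and continuous at $m_0$ with $\nu(f_2(m))-\nu(f_1(m))=h_M(m)^r(\delta f)_\nu(m)$ for all $m$ near $m_0$. The vector $(\delta f)_\nu(m_0)$ transforms as a tangent vector in $T_{q_0}Q$ under change of chart, and this tangent vector is the $r$-residual $\operatorname{res}^r(f_2,f_1)(m_0)$, defined for $m_0\in h_M^{-1}(0)$ (similarly with $h_N$ for maps on $N$). For a $C^1$ map $f\colon M\to N$ with $f(h_M^{-1}(0))\subseteq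 h_N^{-1}(0)$, the function $\dot f\colon h_M^{-1}(0)\to\mathbb R$ is defined by $d(h_N\circ f)(m)=\dot f(m)\,dh_M(m)$. *)

theory Defs
  imports "HOL-Analysis.Analysis"
begin

text \<open>A k-linear bounded map is represented as a function on sequences of vectors
  that only depends on the first k entries.\<close>
definition multilin_bounded :: "nat \<Rightarrow> ((nat \<Rightarrow> 'e::real_normed_vector) \<Rightarrow> 'f::real_normed_vector) \<Rightarrow> bool" where
  "multilin_bounded k L \<longleftrightarrow>
     (\<forall>vs ws. (\<forall>i<k. vs i = ws i) \<longrightarrow> L vs = L ws) \<and>
     (\<forall>i<k. \<forall>vs u w a b. L (vs(i := a *\<^sub>R u + b *\<^sub>R w)) = a *\<^sub>R L (vs(i := u)) + b *\<^sub>R L (vs(i := w))) \<and>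
     (\<exists>C. \<forall>vs. norm (L vs) \<le> C * (\<Prod>i<k. norm (vs i)))"

text \<open>A tower of Frechet derivatives: D k x is the k-th derivative at x, and each
  level is Frechet differentiable (in the operator norm) with derivative the next level.\<close>
definition deriv_tower :: "'e::real_normed_vector set \<Rightarrow> ('e \<Rightarrow> 'f::real_normed_vector) \<Rightarrow> (nat \<Rightarrow> 'e \<Rightarrow> (nat \<Rightarrow> 'e) \<Rightarrow> 'f) \<Rightarrow> bool" where
  "deriv_tower S F D \<longleftrightarrow>
     (\<forall>x\<in>S. \<forall>vs. D 0 x vs = F x) \<and>
     (\<forall>k. \<forall>x\<in>S. multilin_bounded k (D k x)) \<and>
     (\<forall>k. \<forall>x\<in>S. \<forall>\<epsilon>>0. \<exists>\<delta>>0. \<forall>y\<in>S. norm (y - x) < \<delta> \<longrightarrow>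
        (\<forall>vs. (\<forall>i<k. norm (vs i) \<le> 1) \<longrightarrow>
           norm (D k y vs - D k x vs - D (Suc k) x (vs(k := y - x))) \<le> \<epsilon> * norm (y - x)))"

definition smooth_on :: "'e::real_normed_vector set \<Rightarrow> ('e \<Rightarrow> 'f::real_normed_vector) \<Rightarrow> bool" where
  "smooth_on S F \<longleftrightarrow> open S \<and> (\<exists>D. deriv_tower S F D)"

definition C1_on :: "'e::real_normed_vector set \<Rightarrow> ('e \<Rightarrow> 'f::real_normed_vector) \<Rightarrow> bool" where
  "C1_on S F \<longleftrightarrow> open S \<and> (\<exists>D :: 'e \<Rightarrow> ('e \<Rightarrow>\<^sub>L 'f).
      continuous_on S D \<and> (\<forall>x\<in>S. (F has_derivative blinfun_apply (D x)) (at x)))"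

definition is_chart :: "'m::topological_space set \<times> ('m \<Rightarrow> 'e::banach) \<Rightarrow> bool" where
  "is_chart c \<longleftrightarrow> (case c of (U, \<phi>) \<Rightarrow>
     open U \<and> open (\<phi> ` U) \<and> inj_on \<phi> U \<and> continuous_on U \<phi> \<and> continuous_on (\<phi> ` U) (inv_into U \<phi>))"

definition smooth_compat :: "'m::topological_space set \<times> ('m \<Rightarrow> 'e::banach) \<Rightarrow> 'm set \<times> ('m \<Rightarrow> 'e) \<Rightarrow> bool" where
  "smooth_compat c d \<longleftrightarrow> (case c of (U, \<phi>) \<Rightarrow> case d of (V, \<psi>) \<Rightarrow>
     smooth_on (\<phi> ` (U \<inter> V)) (\<psi> \<circ> inv_into U \<phi>) \<and> smooth_on (\<psi> ` (U \<inter> V)) (\<phi> \<circ> inv_into V \<psi>))"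

definition banach_manifold :: "('m::t2_space set \<times> ('m \<Rightarrow> 'e::banach)) set \<Rightarrow> bool" where
  "banach_manifold A \<longleftrightarrow> (\<forall>c\<in>A. is_chart c) \<and> (\<forall>x. \<exists>c\<in>A. x \<in> fst c) \<and>
     (\<forall>c\<in>A. \<forall>d\<in>A. smooth_compat c d)"

text \<open>Charts of the maximal atlas determined by A.\<close>
definition chart_of :: "('m::topological_space set \<times> ('m \<Rightarrow> 'e::banach)) set \<Rightarrow> 'm set \<times> ('m \<Rightarrow> 'e) \<Rightarrow> bool" where
  "chart_of A c \<longleftrightarrow> is_chart c \<and> (\<forall>d\<in>A. smooth_compat c d)"

definition smooth_fun :: "('m::topological_space set \<times> ('m \<Rightarrow> 'e::banach)) set \<Rightarrow> ('m \<Rightarrow> real) \<Rightarrow> bool" where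
  "smooth_fun A h \<longleftrightarrow> (\<forall>(U, \<phi>)\<in>A. smooth_on (\<phi> ` U) (h \<circ> inv_into U \<phi>))"

definition C1_map :: "('m::topological_space set \<times> ('m \<Rightarrow> 'e::banach)) set \<Rightarrow>
    ('n::topological_space set \<times> ('n \<Rightarrow> 'f::banach)) set \<Rightarrow> ('m \<Rightarrow> 'n) \<Rightarrow> bool" where
  "C1_map A B f \<longleftrightarrow> continuous_on UNIV f \<and>
     (\<forall>(U, \<phi>)\<in>A. \<forall>(V, \<psi>)\<in>B. C1_on (\<phi> ` (U \<inter> f -` V)) (\<psi> \<circ> f \<circ> inv_into U \<phi>))"

text \<open>0 is a regular value of h: the differential of h is nonzero (hence onto \<real>) on h^-1(0).\<close>
definition regular_value0 :: "('m::topological_space set \<times> ('m \<Rightarrow> 'e::banach)) set \<Rightarrow> ('m \<Rightarrow> real) \<Rightarrow> bool" where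
  "regular_value0 A h \<longleftrightarrow> (\<forall>m. h m = 0 \<longrightarrow> (\<forall>(U, \<phi>)\<in>A. m \<in> U \<longrightarrow>
      frechet_derivative (h \<circ> inv_into U \<phi>) (at (\<phi> m)) \<noteq> (\<lambda>_. 0)))"

text \<open>f2 = f1 + O(h^r): representation of the difference in a chart (V, psi) near m0.\<close>
definition O_rep :: "('m::t2_space \<Rightarrow> real) \<Rightarrow> nat \<Rightarrow> 'q set \<times> ('q \<Rightarrow> 'g::real_normed_vector)
    \<Rightarrow> ('m \<Rightarrow> 'q) \<Rightarrow> ('m \<Rightarrow> 'q) \<Rightarrow> 'm \<Rightarrow> ('m \<Rightarrow> 'g) \<Rightarrow> bool" where
  "O_rep h r c f2 f1 m0 \<delta> \<longleftrightarrow> (case c of (V, \<psi>) \<Rightarrow>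
     continuous (at m0) \<delta> \<and>
     (\<exists>W. open W \<and> m0 \<in> W \<and>
        (\<forall>m\<in>W. f1 m \<in> V \<and> f2 m \<in> V \<and> \<psi> (f2 m) - \<psi> (f1 m) = h m ^ r *\<^sub>R \<delta> m)))"

definition bigO :: "('m::t2_space \<Rightarrow> real) \<Rightarrow> nat \<Rightarrow>
    ('q::topological_space set \<times> ('q \<Rightarrow> 'g::banach)) set \<Rightarrow> ('m \<Rightarrow> 'q) \<Rightarrow> ('m \<Rightarrow> 'q) \<Rightarrow> bool" where
  "bigO h r B f2 f1 \<longleftrightarrow> (\<forall>m. h m = 0 \<longrightarrow> f2 m = f1 m) \<and>
     (\<forall>m0. h m0 = 0 \<longrightarrow> (\<exists>c \<delta>. chart_of B c \<and> f1 m0 \<in> fst c \<and> O_rep h r c f2 f1 m0 \<delta>))"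

text \<open>The r-residual at m0, expressed in the chart c: the value (delta f)_c(m0).\<close>
definition res_rep :: "('m::t2_space \<Rightarrow> real) \<Rightarrow> nat \<Rightarrow> 'q set \<times> ('q \<Rightarrow> 'g::real_normed_vector)
    \<Rightarrow> ('m \<Rightarrow> 'q) \<Rightarrow> ('m \<Rightarrow> 'q) \<Rightarrow> 'm \<Rightarrow> 'g" where
  "res_rep h r c f2 f1 m0 = (THE v. \<exists>\<delta>. O_rep h r c f2 f1 m0 \<delta> \<and> \<delta> m0 = v)"

text \<open>f-dot: d(h_N o f)(m) = fdot(m) dh_M(m), computed in charts of M.\<close>
definition fdot :: "('m::topological_space set \<times> ('m \<Rightarrow> 'e::banach)) set \<Rightarrow> ('m \<Rightarrow> real) \<Rightarrow>
    ('n \<Rightarrow> real) \<Rightarrow> ('m \<Rightarrow> 'n) \<Rightarrow> 'm \<Rightarrow> real" where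
  "fdot A hM hN f m = (THE a. \<forall>(U, \<phi>)\<in>A. m \<in> U \<longrightarrow>
      frechet_derivative (hN \<circ> f \<circ> inv_into U \<phi>) (at (\<phi> m)) =
      (\<lambda>v. a * frechet_derivative (hM \<circ> inv_into U \<phi>) (at (\<phi> m)) v))"

end

theory Submission
  imports Defs
begin

text \<open>
  In charts, the r-residual of f2 against f1 is the limit of the difference quotient
  (\<psi> f2 - \<psi> f1) / hM^r along the set hM \<noteq> 0, which accumulates at every zero of hM
  because 0 is a regular value. Split
  \<psi>(g2 f2) - \<psi>(g1 f1) = (\<psi>(g2 f2) - \<psi>(g1 f2)) + (\<psi>(g1 f2) - \<psi>(g1 f1)).
  A C1 map is strictly differentiable, so the quotient of the second term tends to the derivative
  of g1 applied to the residual of f. The quotient of the first term is (hN(f2) / hM)^r times the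
  residual quotient of g at f2, and hN(f2) / hM tends to fdot: sliding a point along a direction
  transversal to the zero set of hM until it hits that set turns this ratio into a quotient of
  two difference quotients over the same segment.
\<close>

section \<open>C1 maps on open subsets of normed spaces\<close>

lemma C1_on_open: "C1_on S F \<Longrightarrow> open S"
  unfolding C1_on_def by blast

lemma C1_on_has_derivative:
  assumes "C1_on S F" "x \<in> S"
  shows "(F has_derivative frechet_derivative F (at x)) (at x)"
  using assms unfolding C1_on_def by (metis frechet_derivative_at)

lemma C1_on_isCont: "C1_on S F \<Longrightarrow> x \<in> S \<Longrightarrow> isCont F x"
  using C1_on_has_derivative has_derivative_continuous by blast

lemma C1_on_derivative_uniformly_close:
  assumes "C1_on S F" "x \<in> S" "e > 0"
  obtains d where "d > 0" "\<And>y w. y \<in> S \<Longrightarrow> dist y x < d \<Longrightarrow>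
      norm (frechet_derivative F (at y) w - frechet_derivative F (at x) w) \<le> e * norm w"
proof -
  obtain D :: "_ \<Rightarrow> _ \<Rightarrow>\<^sub>L _" where cont: "continuous_on S D"
    and der: "\<And>x. x \<in> S \<Longrightarrow> (F has_derivative blinfun_apply (D x)) (at x)"
    using assms(1) unfolding C1_on_def by blast
  have fd: "frechet_derivative F (at y) = blinfun_apply (D y)" if "y \<in> S" for y
    using frechet_derivative_at[OF der[OF that]] by simp
  obtain d where "d > 0" and d: "\<And>y. y \<in> S \<Longrightarrow> dist y x < d \<Longrightarrow> dist (D y) (D x) < e"
    using cont assms(2,3) unfolding continuous_on_iff by blast
  have "norm (frechet_derivative F (at y) w - frechet_derivative F (at x) w) \<le> e * norm w"
    if "y \<in> S" "dist y x < d" for y w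
  proof -
    have "norm (frechet_derivative F (at y) w - frechet_derivative F (at x) w) = norm (blinfun_apply (D y - D x) w)"
      using fd that(1) assms(2) by (simp add: blinfun.diff_left)
    also have "\<dots> \<le> norm (D y - D x) * norm w" by (rule norm_blinfun)
    also have "\<dots> \<le> e * norm w"
      using d[OF that] by (simp add: dist_norm mult_right_mono)
    finally show ?thesis .
  qed
  with \<open>d > 0\<close> show ?thesis using that by blast
qed

lemma C1_on_subset: "C1_on S F \<Longrightarrow> open T \<Longrightarrow> T \<subseteq> S \<Longrightarrow> C1_on T F"
  unfolding C1_on_def by (meson continuous_on_subset subsetD)

lemma C1_on_cong: "C1_on S F \<Longrightarrow> (\<And>x. x \<in> S \<Longrightarrow> G x = F x) \<Longrightarrow> C1_on S G"
  unfolding C1_on_def by (metis has_derivative_transform_within_open)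

lemma C1_on_compose:
  assumes F: "C1_on S F" and G: "C1_on T G" and "F ` S \<subseteq> T"
  shows "C1_on S (G \<circ> F)"
proof -
  obtain DF :: "_ \<Rightarrow> _ \<Rightarrow>\<^sub>L _" where "continuous_on S DF"
    and dF: "\<And>x. x \<in> S \<Longrightarrow> (F has_derivative blinfun_apply (DF x)) (at x)"
    using F unfolding C1_on_def by blast
  obtain DG :: "_ \<Rightarrow> _ \<Rightarrow>\<^sub>L _" where "continuous_on T DG"
    and dG: "\<And>y. y \<in> T \<Longrightarrow> (G has_derivative blinfun_apply (DG y)) (at y)"
    using G unfolding C1_on_def by blast
  have "continuous_on S F"
    using dF by (intro continuous_at_imp_continuous_on ballI has_derivative_continuous)
  then have "continuous_on S (\<lambda>x. DG (F x))"
    using continuous_on_compose2[OF \<open>continuous_on T DG\<close> _ assms(3)] by blast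
  then have cont: "continuous_on S (\<lambda>x. DG (F x) o\<^sub>L DF x)"
    using \<open>continuous_on S DF\<close> by (intro continuous_intros)
  show ?thesis
    unfolding C1_on_def
  proof (intro conjI exI[of _ "\<lambda>x. DG (F x) o\<^sub>L DF x"] ballI)
    show "open S" using C1_on_open[OF F] .
    show "continuous_on S (\<lambda>x. DG (F x) o\<^sub>L DF x)" by (rule cont)
    fix x assume "x \<in> S"
    then show "((G \<circ> F) has_derivative blinfun_apply (DG (F x) o\<^sub>L DF x)) (at x)"
    proof -
      have "blinfun_apply (DG (F x) o\<^sub>L DF x) = blinfun_apply (DG (F x)) \<circ> blinfun_apply (DF x)"
        by (simp add: fun_eq_iff)
      then show ?thesis
        using diff_chain_at[OF dF dG] \<open>x \<in> S\<close> assms(3) by auto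
    qed
  qed
qed

lemma C1_on_local:
  assumes "open S" and local: "\<And>x. x \<in> S \<Longrightarrow> \<exists>T. open T \<and> x \<in> T \<and> C1_on T F"
  shows "C1_on S F"
proof -
  define D where "D x = Blinfun (frechet_derivative F (at x))" for x
  have "\<exists>T. open T \<and> x \<in> T \<and> continuous_on T D \<and> (\<forall>y\<in>T. (F has_derivative blinfun_apply (D y)) (at y))"
    if x: "x \<in> S" for x
  proof -
    obtain T DT where T: "open T" "x \<in> T" "continuous_on T DT"
      and dT: "\<And>y. y \<in> T \<Longrightarrow> (F has_derivative blinfun_apply (DT y)) (at y)"
      using local[OF x] unfolding C1_on_def by blast
    have "D y = DT y" if "y \<in> T" for y
      using frechet_derivative_at[OF dT[OF that]] by (metis D_def blinfun_apply_inverse)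
    then have "continuous_on T D" "\<forall>y\<in>T. (F has_derivative blinfun_apply (D y)) (at y)"
      using T(3) dT by (auto cong: continuous_on_cong)
    with T(1,2) show ?thesis by blast
  qed
  then have "isCont D x" "(F has_derivative blinfun_apply (D x)) (at x)" if "x \<in> S" for x
    using that continuous_on_eq_continuous_at by blast+
  with assms(1) show ?thesis
    unfolding C1_on_def by (blast intro: continuous_at_imp_continuous_on)
qed

lemma C1_on_strict_derivative:
  assumes C: "C1_on S G" and y0: "y0 \<in> S" and "e > 0"
  shows "\<exists>d>0. ball y0 d \<subseteq> S \<and> (\<forall>a\<in>ball y0 d. \<forall>b\<in>ball y0 d.
      norm (G b - G a - frechet_derivative G (at y0) (b - a)) \<le> e * norm (b - a))"
proof -
  define G' where "G' y = frechet_derivative G (at y)" for y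
  obtain d1 where "d1 > 0" and d1: "\<And>y w. y \<in> S \<Longrightarrow> dist y y0 < d1 \<Longrightarrow> norm (G' y w - G' y0 w) \<le> e * norm w"
    using C1_on_derivative_uniformly_close[OF C y0 \<open>e > 0\<close>] unfolding G'_def by blast
  obtain d2 where "d2 > 0" "ball y0 d2 \<subseteq> S" using C1_on_open[OF C] y0 open_contains_ball by blast
  define d where "d = min d1 d2"
  have "d > 0" using \<open>d1 > 0\<close> \<open>d2 > 0\<close> unfolding d_def by simp
  have ball_S: "ball y0 d \<subseteq> S" using \<open>ball y0 d2 \<subseteq> S\<close> unfolding d_def by auto
  have hd: "(G has_derivative G' y) (at y within ball y0 d)" if "y \<in> ball y0 d" for y
    unfolding G'_def using C1_on_has_derivative[OF C] ball_S that has_derivative_at_withinI by blast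
  have on: "onorm (G' y - G' y0) \<le> e" if "y \<in> ball y0 d" for y
  proof (rule onorm_bound)
    show "0 \<le> e" using \<open>e > 0\<close> by simp
    have "y \<in> S" "dist y y0 < d1" using that ball_S by (auto simp: d_def dist_commute)
    then show "norm ((G' y - G' y0) w) \<le> e * norm w" for w
      using d1 by (simp add: fun_diff_def)
  qed
  have "norm (G b - G a - G' y0 (b - a)) \<le> e * norm (b - a)" if "a \<in> ball y0 d" "b \<in> ball y0 d" for a b
  proof -
    have "a + t *\<^sub>R (b - a) \<in> ball y0 d" if "t \<in> {0..1}" for t
    proof -
      have "a + t *\<^sub>R (b - a) = (1 - t) *\<^sub>R a + t *\<^sub>R b" by (simp add: algebra_simps)
      then show ?thesis using convex_ball[of y0 d] \<open>a \<in> ball y0 d\<close> \<open>b \<in> ball y0 d\<close> that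
        unfolding convex_def by auto
    qed
    from differentiable_bound_linearization[OF this hd on centre_in_ball[THEN iffD2, OF \<open>d > 0\<close>]]
    show ?thesis by (simp add: mult.commute)
  qed
  with \<open>d > 0\<close> ball_S show ?thesis unfolding G'_def by blast
qed

lemma C1_on_difference_quotient_tendsto:
  assumes C: "C1_on S G" and y0: "y0 \<in> S"
    and a: "(a \<longlongrightarrow> y0) F" and b: "(b \<longlongrightarrow> y0) F"
    and v: "((\<lambda>x. (1 / s x) *\<^sub>R (b x - a x)) \<longlongrightarrow> v) F"
  shows "((\<lambda>x. (1 / s x) *\<^sub>R (G (b x) - G (a x))) \<longlongrightarrow> frechet_derivative G (at y0) v) F"
proof -
  define G' where "G' = frechet_derivative G (at y0)"
  have bl: "bounded_linear G'"
    unfolding G'_def using C1_on_has_derivative[OF C y0] has_derivative_bounded_linear by blast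
  note lin = bounded_linear.linear[OF bl]
  have "((\<lambda>x. (1 / s x) *\<^sub>R (G (b x) - G (a x)) - G' ((1 / s x) *\<^sub>R (b x - a x))) \<longlongrightarrow> 0) F"
    unfolding tendsto_iff
  proof (intro allI impI)
    fix e :: real assume "e > 0"
    define K where "K = norm v + 1"
    have "K > 0" unfolding K_def by (simp add: add_nonneg_pos)
    then have "e / (2 * K) > 0" using \<open>e > 0\<close> by simp
    from C1_on_strict_derivative[OF C y0 this, folded G'_def]
    obtain d where "d > 0" and strict: "\<And>a b. a \<in> ball y0 d \<Longrightarrow> b \<in> ball y0 d \<Longrightarrow>
        norm (G b - G a - G' (b - a)) \<le> e / (2 * K) * norm (b - a)"
      by blast
    have "\<forall>\<^sub>F x in F. a x \<in> ball y0 d" "\<forall>\<^sub>F x in F. b x \<in> ball y0 d"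
      using tendstoD[OF a \<open>d > 0\<close>] tendstoD[OF b \<open>d > 0\<close>] by (simp_all add: dist_commute)
    moreover have "\<forall>\<^sub>F x in F. dist ((1 / s x) *\<^sub>R (b x - a x)) v < 1"
      using tendstoD[OF v zero_less_one] .
    ultimately show "\<forall>\<^sub>F x in F. dist ((1 / s x) *\<^sub>R (G (b x) - G (a x)) - G' ((1 / s x) *\<^sub>R (b x - a x))) 0 < e"
    proof eventually_elim
      case (elim x)
      have "norm ((1 / s x) *\<^sub>R (b x - a x)) < K"
        using elim(3) norm_triangle_ineq2[of "(1 / s x) *\<^sub>R (b x - a x)" v] unfolding K_def dist_norm by linarith
      have "norm ((1 / s x) *\<^sub>R (G (b x) - G (a x)) - G' ((1 / s x) *\<^sub>R (b x - a x)))
          = \<bar>1 / s x\<bar> * norm (G (b x) - G (a x) - G' (b x - a x))"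
        by (simp add: linear_scale[OF lin] linear_diff[OF lin] flip: scaleR_diff_right)
      also have "\<dots> \<le> \<bar>1 / s x\<bar> * (e / (2 * K) * norm (b x - a x))"
        by (rule mult_left_mono[OF strict[OF elim(1,2)]]) simp
      also have "\<dots> = e / (2 * K) * norm ((1 / s x) *\<^sub>R (b x - a x))" by simp
      also have "\<dots> \<le> e / (2 * K) * K"
        using \<open>norm ((1 / s x) *\<^sub>R (b x - a x)) < K\<close> \<open>e / (2 * K) > 0\<close> by (intro mult_left_mono) auto
      also have "\<dots> < e" using \<open>K > 0\<close> \<open>e > 0\<close> by simp
      finally show ?case by (simp only: dist_norm diff_zero)
    qed
  qed
  from tendsto_add[OF this bounded_linear.tendsto[OF bl v]] show ?thesis by (simp add: G'_def)
qed

lemma linear_norm_bound_from_unit_ball: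
  assumes "linear A" "\<And>w. norm w \<le> 1 \<Longrightarrow> norm (A w) \<le> c"
  shows "norm (A w) \<le> c * norm w"
proof (cases "w = 0")
  case True then show ?thesis using linear_0[OF assms(1)] by simp
next
  case False
  have "A w = norm w *\<^sub>R A ((1 / norm w) *\<^sub>R w)"
    using False by (simp add: linear_scale[OF assms(1)])
  then have "norm (A w) = norm w * norm (A ((1 / norm w) *\<^sub>R w))" by simp
  also have "\<dots> \<le> norm w * c" using assms(2)[of "(1 / norm w) *\<^sub>R w"] False by (simp add: mult_left_mono)
  finally show ?thesis by (simp add: mult.commute)
qed

lemma multilin_bounded_1:
  assumes "multilin_bounded 1 L"
  shows "bounded_linear (\<lambda>w. L (\<lambda>_. w))" and "L vs = L (\<lambda>_. vs 0)"
proof -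
  note md = assms[unfolded multilin_bounded_def]
  have dep_all: "\<forall>vs ws. (\<forall>i<1. vs i = ws i) \<longrightarrow> L vs = L ws"
    by (fact conjunct1[OF md])
  have lin_all: "\<forall>i<1. \<forall>vs u w a b. L (vs(i := a *\<^sub>R u + b *\<^sub>R w)) = a *\<^sub>R L (vs(i := u)) + b *\<^sub>R L (vs(i := w))"
    by (fact conjunct1[OF conjunct2[OF md]])
  have bound: "\<exists>C. \<forall>vs. norm (L vs) \<le> C * (\<Prod>i<1. norm (vs i))"
    by (fact conjunct2[OF conjunct2[OF md]])
  have dep: "L vs = L ws" if "vs 0 = ws 0" for vs ws
    using dep_all that less_one by metis
  show "L vs = L (\<lambda>_. vs 0)" by (rule dep) simp
  have "L (\<lambda>_. a *\<^sub>R u + b *\<^sub>R w) = a *\<^sub>R L (\<lambda>_. u) + b *\<^sub>R L (\<lambda>_. w)" for a b u w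
  proof -
    have "L ((\<lambda>_. 0)(0 := a *\<^sub>R u + b *\<^sub>R w))
        = a *\<^sub>R L ((\<lambda>_. 0)(0 := u)) + b *\<^sub>R L ((\<lambda>_. 0)(0 := w))"
      using lin_all[rule_format, of 0 "\<lambda>_. 0"] by simp
    moreover have "L ((\<lambda>_. 0)(0 := z)) = L (\<lambda>_. z)" for z
      by (rule dep) simp
    ultimately show ?thesis by simp
  qed
  note lin = this
  obtain C where C: "\<And>vs. norm (L vs) \<le> C * (\<Prod>i<1. norm (vs i))"
    using bound by blast
  show "bounded_linear (\<lambda>w. L (\<lambda>_. w))"
  proof (rule bounded_linear_intro[where K=C])
    show "L (\<lambda>_. u + w) = L (\<lambda>_. u) + L (\<lambda>_. w)" for u w using lin[of 1 u 1 w] by simp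
    show "L (\<lambda>_. r *\<^sub>R u) = r *\<^sub>R L (\<lambda>_. u)" for r u using lin[of r u 0 0] by simp
    show "norm (L (\<lambda>_. u)) \<le> norm u * C" for u using C[of "\<lambda>_. u"] by (simp add: mult.commute)
  qed
qed

lemma deriv_towerD:
  assumes "deriv_tower S F D" "x \<in> S"
  shows "D 0 x vs = F x" and "multilin_bounded k (D k x)"
    and "e > 0 \<Longrightarrow> \<exists>\<delta>>0. \<forall>y\<in>S. norm (y - x) < \<delta> \<longrightarrow> (\<forall>vs. (\<forall>i<k. norm (vs i) \<le> 1) \<longrightarrow>
           norm (D k y vs - D k x vs - D (Suc k) x (vs(k := y - x))) \<le> e * norm (y - x))"
  using assms(2) assms(1)[unfolded deriv_tower_def, THEN conjunct1]
    assms(1)[unfolded deriv_tower_def, THEN conjunct2, THEN conjunct1]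
    assms(1)[unfolded deriv_tower_def, THEN conjunct2, THEN conjunct2]
  by simp_all

lemma deriv_tower_has_derivative:
  assumes T: "deriv_tower S F D" and "open S" "x \<in> S"
  shows "(F has_derivative (\<lambda>w. D 1 x (\<lambda>_. w))) (at x)"
  unfolding has_derivative_at_alt
proof (intro conjI allI impI)
  show "bounded_linear (\<lambda>w. D 1 x (\<lambda>_. w))"
    by (rule multilin_bounded_1(1)[OF deriv_towerD(2)[OF T assms(3)]])
  fix e :: real assume "e > 0"
  from deriv_towerD(3)[OF T assms(3) this, of 0]
  obtain \<delta> where "\<delta> > 0" and \<delta>: "\<And>y. y \<in> S \<Longrightarrow> norm (y - x) < \<delta> \<Longrightarrow>
      norm (D 0 y (\<lambda>_. 0) - D 0 x (\<lambda>_. 0) - D 1 x ((\<lambda>_. 0)(0 := y - x))) \<le> e * norm (y - x)"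
    by auto
  obtain d where "d > 0" "ball x d \<subseteq> S" using assms(2,3) open_contains_ball by blast
  show "\<exists>d>0. \<forall>y. norm (y - x) < d \<longrightarrow> norm (F y - F x - D 1 x (\<lambda>_. y - x)) \<le> e * norm (y - x)"
  proof (intro exI[of _ "min \<delta> d"] conjI allI impI)
    show "min \<delta> d > 0" using \<open>\<delta> > 0\<close> \<open>d > 0\<close> by simp
    fix y assume y: "norm (y - x) < min \<delta> d"
    then have "y \<in> S" using \<open>ball x d \<subseteq> S\<close> by (auto simp: dist_norm norm_minus_commute)
    moreover have "D 1 x ((\<lambda>_. 0)(0 := y - x)) = D 1 x (\<lambda>_. y - x)"
      using multilin_bounded_1(2)[OF deriv_towerD(2)[OF T assms(3)]] by (metis fun_upd_same)
    ultimately show "norm (F y - F x - D 1 x (\<lambda>_. y - x)) \<le> e * norm (y - x)"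
      using \<delta>[of y] y deriv_towerD(1)[OF T] assms(3) by simp
  qed
qed

lemma deriv_tower_derivative_lipschitz:
  assumes T: "deriv_tower S F D" and x: "x \<in> S"
  obtains \<delta> K where "\<delta> > 0" "K \<ge> 0"
    "\<And>y w. y \<in> S \<Longrightarrow> norm (y - x) < \<delta> \<Longrightarrow> norm (D 1 y (\<lambda>_. w) - D 1 x (\<lambda>_. w)) \<le> K * norm (y - x) * norm w"
proof -
  from deriv_towerD(3)[OF T x zero_less_one, of 1]
  obtain \<delta> where "\<delta> > 0" and \<delta>: "\<And>y w. y \<in> S \<Longrightarrow> norm (y - x) < \<delta> \<Longrightarrow> norm w \<le> 1 \<Longrightarrow>
      norm (D 1 y (\<lambda>_. w) - D 1 x (\<lambda>_. w) - D 2 x ((\<lambda>_. w)(1 := y - x))) \<le> norm (y - x)"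
    by (auto simp: numeral_2_eq_2)
  obtain C where C: "\<And>vs. norm (D 2 x vs) \<le> C * (\<Prod>i<2. norm (vs i))"
    using deriv_towerD(2)[OF T x, of 2] unfolding multilin_bounded_def by blast
  define K where "K = 1 + \<bar>C\<bar>"
  have unit: "norm (D 1 y (\<lambda>_. w) - D 1 x (\<lambda>_. w)) \<le> K * norm (y - x)"
    if y: "y \<in> S" "norm (y - x) < \<delta>" and w: "norm w \<le> 1" for y w
  proof -
    let ?vs = "(\<lambda>_::nat. w)(1 := y - x)"
    have "norm (D 2 x ?vs) \<le> C * (norm w * norm (y - x))"
      using C[of ?vs] by (simp add: numeral_2_eq_2 lessThan_Suc mult.commute)
    also have "\<dots> \<le> \<bar>C\<bar> * (norm w * norm (y - x))"
      by (simp add: mult_right_mono)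
    also have "\<dots> \<le> \<bar>C\<bar> * norm (y - x)"
      using w by (simp add: mult_left_mono mult_left_le_one_le)
    finally have "norm (D 2 x ?vs) \<le> \<bar>C\<bar> * norm (y - x)" .
    moreover have "norm (D 1 y (\<lambda>_. w) - D 1 x (\<lambda>_. w) - D 2 x ?vs) \<le> norm (y - x)"
      using \<delta>[OF y w] .
    ultimately show ?thesis
      unfolding K_def using norm_triangle_ineq4[of "D 1 y (\<lambda>_. w) - D 1 x (\<lambda>_. w) - D 2 x ?vs" "- D 2 x ?vs"]
      by (simp add: algebra_simps)
  qed
  have "norm (D 1 y (\<lambda>_. w) - D 1 x (\<lambda>_. w)) \<le> K * norm (y - x) * norm w"
    if y: "y \<in> S" "norm (y - x) < \<delta>" for y w
  proof (rule linear_norm_bound_from_unit_ball[OF _ unit[OF y]])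
    show "linear (\<lambda>w. D 1 y (\<lambda>_. w) - D 1 x (\<lambda>_. w))"
      using multilin_bounded_1(1)[OF deriv_towerD(2)[OF T]] x y(1)
      by (intro linear_compose_sub bounded_linear.linear) auto
  qed
  moreover have "K \<ge> 0" unfolding K_def by simp
  ultimately show ?thesis using that \<open>\<delta> > 0\<close> by blast
qed

lemma smooth_on_imp_C1_on:
  assumes "smooth_on S F"
  shows "C1_on S F"
proof -
  obtain D where T: "deriv_tower S F D" and "open S"
    using assms unfolding smooth_on_def by blast
  define D' where "D' x = Blinfun (\<lambda>w. D 1 x (\<lambda>_. w))" for x
  have D': "blinfun_apply (D' x) = (\<lambda>w. D 1 x (\<lambda>_. w))" if "x \<in> S" for x
    unfolding D'_def by (rule bounded_linear_Blinfun_apply[OF multilin_bounded_1(1)[OF deriv_towerD(2)[OF T that]]])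
  have "continuous_on S D'"
    unfolding continuous_on_iff
  proof (intro ballI allI impI)
    fix x e assume x: "x \<in> S" and "(e::real) > 0"
    obtain \<delta> K where "\<delta> > 0" "K \<ge> 0" and lip: "\<And>y w. y \<in> S \<Longrightarrow> norm (y - x) < \<delta> \<Longrightarrow>
        norm (D 1 y (\<lambda>_. w) - D 1 x (\<lambda>_. w)) \<le> K * norm (y - x) * norm w"
      using deriv_tower_derivative_lipschitz[OF T x] by blast
    show "\<exists>d>0. \<forall>y\<in>S. dist y x < d \<longrightarrow> dist (D' y) (D' x) < e"
    proof (intro exI[of _ "min \<delta> (e / (K + 1))"] conjI ballI impI)
      show "min \<delta> (e / (K + 1)) > 0" using \<open>\<delta> > 0\<close> \<open>K \<ge> 0\<close> \<open>e > 0\<close> by simp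
      fix y assume y: "y \<in> S" "dist y x < min \<delta> (e / (K + 1))"
      have "norm (D' y - D' x) \<le> K * norm (y - x)"
      proof (rule norm_blinfun_bound)
        show "0 \<le> K * norm (y - x)" using \<open>K \<ge> 0\<close> by simp
        show "norm (blinfun_apply (D' y - D' x) w) \<le> K * norm (y - x) * norm w" for w
          using lip[of y w] y x by (simp add: blinfun.diff_left D' dist_norm)
      qed
      also have "\<dots> \<le> K * (e / (K + 1))"
        using y \<open>K \<ge> 0\<close> by (intro mult_left_mono) (auto simp: dist_norm)
      also have "\<dots> < e"
        using \<open>K \<ge> 0\<close> \<open>e > 0\<close> by (simp add: field_simps)
      finally show "dist (D' y) (D' x) < e" by (simp add: dist_norm)
    qed
  qed
  moreover have "(F has_derivative blinfun_apply (D' x)) (at x)" if "x \<in> S" for x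
    using deriv_tower_has_derivative[OF T \<open>open S\<close> that] D'[OF that] by simp
  ultimately show ?thesis unfolding C1_on_def using \<open>open S\<close> by blast
qed

section \<open>Quotients of functions with a common regular zero set\<close>

lemma zero_of_slope_ge_half:
  fixes g :: "real \<Rightarrow> real"
  assumes "T > 0" and "continuous_on {-T..T} g"
    and slope: "\<And>s u. -T \<le> s \<Longrightarrow> s < u \<Longrightarrow> u \<le> T \<Longrightarrow> (u - s) / 2 \<le> g u - g s"
    and "\<bar>g 0\<bar> < T / 2"
  shows "\<exists>t. g t = 0 \<and> \<bar>t\<bar> \<le> 2 * \<bar>g 0\<bar>"
proof -
  have "g (-T) \<le> 0" "0 \<le> g T"
    using slope[of "-T" 0] slope[of 0 T] \<open>T > 0\<close> \<open>\<bar>g 0\<bar> < T / 2\<close> by auto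
  then obtain t where t: "-T \<le> t" "t \<le> T" "g t = 0"
    using IVT'[of g "-T" 0 T] \<open>T > 0\<close> \<open>continuous_on {-T..T} g\<close> by auto
  have "\<bar>t\<bar> \<le> 2 * \<bar>g 0\<bar>"
    using slope[of 0 t] slope[of t 0] t \<open>T > 0\<close> by (cases t "0::real" rule: linorder_cases) auto
  with t(3) show ?thesis by blast
qed

lemma C1_on_zero_along_direction:
  fixes H :: "'a::real_normed_vector \<Rightarrow> real"
  assumes C: "C1_on S H" and x0: "x0 \<in> S" and "H x0 = 0" and v: "frechet_derivative H (at x0) v = 1"
  obtains d t where "d > 0"
    "\<And>x. norm (x - x0) < d \<Longrightarrow>
       x \<in> S \<and> x + t x *\<^sub>R v \<in> S \<and> H (x + t x *\<^sub>R v) = 0 \<and> \<bar>t x\<bar> \<le> 2 * \<bar>H x\<bar>"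
proof -
  have lin: "linear (frechet_derivative H (at x0))"
    using C1_on_has_derivative[OF C x0] has_derivative_linear by blast
  have "norm v > 0" using v linear_0[OF lin] by (cases "v = 0") auto
  then have "1 / (2 * norm v) > 0" by simp
  from C1_on_strict_derivative[OF C x0 this]
  obtain r where "r > 0" and ball_S: "ball x0 r \<subseteq> S" and strict: "\<And>a b. a \<in> ball x0 r \<Longrightarrow> b \<in> ball x0 r \<Longrightarrow>
      norm (H b - H a - frechet_derivative H (at x0) (b - a)) \<le> 1 / (2 * norm v) * norm (b - a)"
    by blast
  define T where "T = r / (2 * norm v)"
  have "T > 0" using \<open>r > 0\<close> \<open>norm v > 0\<close> unfolding T_def by simp
  then have "T / 2 > 0" by simp
  with C1_on_isCont[OF C x0] have "\<exists>d>0. \<forall>x. dist x x0 < d \<longrightarrow> dist (H x) (H x0) < T / 2"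
    unfolding continuous_at_eps_delta by blast
  then obtain d' where "d' > 0" and small: "\<And>x. dist x x0 < d' \<Longrightarrow> \<bar>H x\<bar> < T / 2"
    using \<open>H x0 = 0\<close> by (auto simp: dist_real_def)
  define d where "d = min (r / 2) d'"
  have "d > 0" using \<open>r > 0\<close> \<open>d' > 0\<close> unfolding d_def by simp
  have "\<exists>t. x + t *\<^sub>R v \<in> S \<and> H (x + t *\<^sub>R v) = 0 \<and> \<bar>t\<bar> \<le> 2 * \<bar>H x\<bar>"
    if x: "norm (x - x0) < d" for x
  proof -
    have on_line: "x + t *\<^sub>R v \<in> ball x0 r" if "\<bar>t\<bar> \<le> T" for t
    proof -
      have "norm (t *\<^sub>R v) \<le> r / 2"
        using mult_right_mono[OF that norm_ge_zero[of v]] \<open>norm v > 0\<close> unfolding T_def by simp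
      moreover have "norm (x - x0) < r / 2" using x unfolding d_def by simp
      ultimately show ?thesis
        using norm_triangle_ineq[of "x - x0" "t *\<^sub>R v"] by (simp add: dist_norm norm_minus_commute algebra_simps)
    qed
    have "continuous_on {-T..T} (\<lambda>t. H (x + t *\<^sub>R v))"
      using on_line ball_S
      by (intro continuous_at_imp_continuous_on ballI isCont_o2[OF _ C1_on_isCont[OF C]]) (auto intro!: continuous_intros)
    moreover have "(u - s) / 2 \<le> H (x + u *\<^sub>R v) - H (x + s *\<^sub>R v)" if "-T \<le> s" "s < u" "u \<le> T" for s u
    proof -
      have "frechet_derivative H (at x0) ((x + u *\<^sub>R v) - (x + s *\<^sub>R v)) = u - s"
        using v by (simp add: linear_scale[OF lin] flip: scaleR_diff_left)
      moreover have "1 / (2 * norm v) * norm ((x + u *\<^sub>R v) - (x + s *\<^sub>R v)) = (u - s) / 2"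
        using that \<open>norm v > 0\<close> by (simp flip: scaleR_diff_left)
      ultimately show ?thesis
        using strict[OF on_line on_line, of s u] that by (auto simp: abs_le_iff)
    qed
    moreover have "\<bar>H (x + 0 *\<^sub>R v)\<bar> < T / 2" using small x unfolding d_def by (simp add: dist_norm)
    ultimately obtain t where t: "H (x + t *\<^sub>R v) = 0" "\<bar>t\<bar> \<le> 2 * \<bar>H x\<bar>"
      using zero_of_slope_ge_half[OF \<open>T > 0\<close>, of "\<lambda>t. H (x + t *\<^sub>R v)"] by auto
    have "\<bar>H x\<bar> < T / 2" using small x unfolding d_def by (simp add: dist_norm)
    with t(2) have "x + t *\<^sub>R v \<in> S" using on_line[of t] ball_S by auto
    with t show ?thesis by blast
  qed
  then have "\<forall>x. \<exists>t. norm (x - x0) < d \<longrightarrow> x + t *\<^sub>R v \<in> S \<and> H (x + t *\<^sub>R v) = 0 \<and> \<bar>t\<bar> \<le> 2 * \<bar>H x\<bar>"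
    by blast
  then obtain t where "\<forall>x. norm (x - x0) < d \<longrightarrow>
      x + t x *\<^sub>R v \<in> S \<and> H (x + t x *\<^sub>R v) = 0 \<and> \<bar>t x\<bar> \<le> 2 * \<bar>H x\<bar>"
    by (rule choice[THEN exE])
  moreover have "x \<in> S" if "norm (x - x0) < d" for x
    using that ball_S \<open>r > 0\<close> unfolding d_def by (auto simp: dist_norm norm_minus_commute)
  ultimately show ?thesis using that \<open>d > 0\<close> by blast
qed

lemma C1_on_ratio_tendsto:
  fixes H Q :: "'a::real_normed_vector \<Rightarrow> real"
  assumes H: "C1_on S H" and Q: "C1_on S Q" and y0: "y0 \<in> S" and "H y0 = 0"
    and dH: "frechet_derivative H (at y0) \<noteq> (\<lambda>_. 0)"
    and zero: "\<And>y. y \<in> S \<Longrightarrow> H y = 0 \<Longrightarrow> Q y = 0"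
  shows "\<exists>a. ((\<lambda>y. Q y / H y) \<longlongrightarrow> a) (at y0 within {y \<in> S. H y \<noteq> 0})"
proof -
  define H' where "H' = frechet_derivative H (at y0)"
  have lin: "linear H'"
    unfolding H'_def using C1_on_has_derivative[OF H y0] has_derivative_linear by blast
  obtain w where "H' w \<noteq> 0" using dH unfolding H'_def by auto
  define v where "v = (1 / H' w) *\<^sub>R w"
  have v: "H' v = 1" unfolding v_def using \<open>H' w \<noteq> 0\<close> by (simp add: linear_scale[OF lin])
  obtain d t where "d > 0" and line: "\<And>y. norm (y - y0) < d \<Longrightarrow>
      y \<in> S \<and> y + t y *\<^sub>R v \<in> S \<and> H (y + t y *\<^sub>R v) = 0 \<and> \<bar>t y\<bar> \<le> 2 * \<bar>H y\<bar>"
    using C1_on_zero_along_direction[OF H y0 \<open>H y0 = 0\<close> v[unfolded H'_def]] by blast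
  define F where "F = at y0 within {y \<in> S. H y \<noteq> 0}"
  \<comment> \<open>\<open>a y\<close> lies on the zero set of \<open>H\<close>, so \<open>Q y / H y\<close> is a quotient of difference quotients over \<open>[a y, y]\<close>\<close>
  define a where "a y = y + t y *\<^sub>R v" for y
  have "\<forall>\<^sub>F y in F. norm (y - y0) < d \<and> H y \<noteq> 0"
    unfolding F_def eventually_at using \<open>d > 0\<close> by (auto simp: dist_norm)
  then have ev: "\<forall>\<^sub>F y in F. t y \<noteq> 0 \<and> (1 / t y) *\<^sub>R (y - a y) = - v \<and> Q (a y) = 0 \<and> H (a y) = 0"
  proof (rule eventually_mono)
    fix y assume y: "norm (y - y0) < d \<and> H y \<noteq> 0"
    with line[of y] have "t y \<noteq> 0" by (metis add_0_right scale_zero_left)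
    then show "t y \<noteq> 0 \<and> (1 / t y) *\<^sub>R (y - a y) = - v \<and> Q (a y) = 0 \<and> H (a y) = 0"
      using line[of y] zero y unfolding a_def by simp
  qed
  have id: "((\<lambda>y. y) \<longlongrightarrow> y0) F" unfolding F_def by (rule tendsto_ident_at)
  have "((\<lambda>y. H y) \<longlongrightarrow> 0) F"
    using isCont_tendsto_compose[OF C1_on_isCont[OF H y0] id] \<open>H y0 = 0\<close> by simp
  then have "(t \<longlongrightarrow> 0) F"
    by (rule tendsto_0_le[of _ _ _ 2])
      (use \<open>\<forall>\<^sub>F y in F. norm (y - y0) < d \<and> H y \<noteq> 0\<close> in \<open>auto elim!: eventually_mono dest!: line simp: mult.commute\<close>)
  then have a: "(a \<longlongrightarrow> y0) F"
    unfolding a_def using tendsto_add[OF id tendsto_scaleR[OF _ tendsto_const[of v]]] by fastforce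
  have quot: "((\<lambda>y. (1 / t y) *\<^sub>R (y - a y)) \<longlongrightarrow> - v) F"
    by (rule Lim_transform_eventually[OF tendsto_const]) (use ev in \<open>auto elim: eventually_mono\<close>)
  have "((\<lambda>y. ((1 / t y) *\<^sub>R (Q y - Q (a y))) / ((1 / t y) *\<^sub>R (H y - H (a y))))
      \<longlongrightarrow> frechet_derivative Q (at y0) (- v) / H' (- v)) F"
  proof (rule tendsto_divide)
    show "H' (- v) \<noteq> 0" using v by (simp add: linear_neg[OF lin])
  qed (use C1_on_difference_quotient_tendsto[OF Q y0 a id quot]
      C1_on_difference_quotient_tendsto[OF H y0 a id quot, folded H'_def] in auto)
  then have "((\<lambda>y. Q y / H y) \<longlongrightarrow> frechet_derivative Q (at y0) (- v) / H' (- v)) F"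
    by (rule Lim_transform_eventually) (use ev in \<open>auto elim: eventually_mono\<close>)
  then show ?thesis unfolding F_def by blast
qed

lemma has_derivative_of_ratio_tendsto:
  fixes H Q :: "'a::real_normed_vector \<Rightarrow> real"
  assumes dH: "(H has_derivative H') (at y0)" and "open S" "y0 \<in> S" "H y0 = 0"
    and zero: "\<And>y. y \<in> S \<Longrightarrow> H y = 0 \<Longrightarrow> Q y = 0"
    and lim: "((\<lambda>y. Q y / H y) \<longlongrightarrow> a) (at y0 within {y \<in> S. H y \<noteq> 0})"
  shows "(Q has_derivative (\<lambda>w. a * H' w)) (at y0)"
proof -
  have "Q y0 = 0" using zero assms(3,4) by blast
  obtain K where "K > 0" and K: "\<And>w. norm (H' w) \<le> norm w * K"
    using bounded_linear.pos_bounded[OF has_derivative_bounded_linear[OF dH]] by blast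
  obtain d1 where "d1 > 0" and d1: "\<And>y. norm (y - y0) < d1 \<Longrightarrow> norm (H y - H y0 - H' (y - y0)) \<le> 1 * norm (y - y0)"
    using dH[unfolded has_derivative_at_alt] zero_less_one by blast
  have lip: "\<bar>H y\<bar> \<le> (K + 1) * norm (y - y0)" if "norm (y - y0) < d1" for y
    using d1[OF that] K[of "y - y0"] norm_triangle_ineq[of "H y - H' (y - y0)" "H' (y - y0)"] \<open>H y0 = 0\<close>
    by (simp add: algebra_simps)
  have "((\<lambda>y. Q y - a * H y) has_derivative (\<lambda>_. 0)) (at y0)"
    unfolding has_derivative_at_alt
  proof (intro conjI allI impI bounded_linear_zero)
    fix e :: real assume "e > 0"
    define e' where "e' = e / (K + 1)"
    have "e' > 0" using \<open>e > 0\<close> \<open>K > 0\<close> unfolding e'_def by simp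
    obtain d2 where "d2 > 0" and d2: "\<And>y. y \<in> S \<Longrightarrow> H y \<noteq> 0 \<Longrightarrow> y \<noteq> y0 \<Longrightarrow> dist y y0 < d2 \<Longrightarrow>
        dist (Q y / H y) a < e'"
      using tendstoD[OF lim \<open>e' > 0\<close>] unfolding eventually_at by auto
    obtain d3 where "d3 > 0" "ball y0 d3 \<subseteq> S" using assms(2,3) open_contains_ball by blast
    show "\<exists>d>0. \<forall>y. norm (y - y0) < d \<longrightarrow> norm (Q y - a * H y - (Q y0 - a * H y0) - 0) \<le> e * norm (y - y0)"
    proof (intro exI[of _ "min d1 (min d2 d3)"] conjI allI impI)
      show "min d1 (min d2 d3) > 0" using \<open>d1 > 0\<close> \<open>d2 > 0\<close> \<open>d3 > 0\<close> by simp
      fix y assume y: "norm (y - y0) < min d1 (min d2 d3)"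
      have "y \<in> S" using y \<open>ball y0 d3 \<subseteq> S\<close> by (auto simp: dist_norm norm_minus_commute)
      have "\<bar>Q y - a * H y\<bar> \<le> e * norm (y - y0)"
      proof (cases "H y = 0")
        case True
        then show ?thesis using zero[OF \<open>y \<in> S\<close>] \<open>e > 0\<close> by simp
      next
        case False
        then have "y \<noteq> y0" using \<open>H y0 = 0\<close> by auto
        with False have "\<bar>Q y / H y - a\<bar> < e'"
          using d2[OF \<open>y \<in> S\<close>] y by (simp add: dist_norm dist_real_def)
        have "\<bar>Q y - a * H y\<bar> = \<bar>Q y / H y - a\<bar> * \<bar>H y\<bar>"
          using False by (simp add: field_simps flip: abs_mult)
        also have "\<dots> \<le> e' * ((K + 1) * norm (y - y0))"
          using \<open>\<bar>Q y / H y - a\<bar> < e'\<close> lip[of y] y by (intro mult_mono) auto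
        also have "\<dots> = e * norm (y - y0)" unfolding e'_def using \<open>K > 0\<close> by simp
        finally show ?thesis .
      qed
      then show "norm (Q y - a * H y - (Q y0 - a * H y0) - 0) \<le> e * norm (y - y0)"
        using \<open>Q y0 = 0\<close> \<open>H y0 = 0\<close> by simp
    qed
  qed
  from has_derivative_add[OF this has_derivative_mult_right[OF dH, of a]] show ?thesis by simp
qed

section \<open>Charts and C1 maps of Banach manifolds\<close>

lemma isCont_eventually_nhds:
  "isCont f x \<Longrightarrow> \<forall>\<^sub>F y in nhds (f x). P y \<Longrightarrow> \<forall>\<^sub>F y in nhds x. P (f y)"
  unfolding isCont_def tendsto_at_iff_tendsto_nhds by (rule eventually_compose_filterlim)

lemma isCont_eventually_in_open:
  "isCont f x \<Longrightarrow> open V \<Longrightarrow> f x \<in> V \<Longrightarrow> \<forall>\<^sub>F y in nhds x. f y \<in> V"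
  by (rule isCont_eventually_nhds[OF _ eventually_nhds_in_open])

lemma tendsto_at_within_of_isCont: "isCont f x \<Longrightarrow> f x = y \<Longrightarrow> (f \<longlongrightarrow> y) (at x within S)"
  using continuous_at tendsto_within_subset by blast

lemma is_chartD:
  assumes "is_chart (U, \<phi>)"
  shows "open U" "open (\<phi> ` U)" "inj_on \<phi> U" "continuous_on U \<phi>" "continuous_on (\<phi> ` U) (inv_into U \<phi>)"
  using assms unfolding is_chart_def by auto

lemma chart_open_image:
  assumes c: "is_chart (U, \<phi>)" and "open W"
  shows "open (\<phi> ` (U \<inter> W))"
proof -
  have "\<phi> ` (U \<inter> W) = inv_into U \<phi> -` W \<inter> \<phi> ` U"
  proof
    show "\<phi> ` (U \<inter> W) \<subseteq> inv_into U \<phi> -` W \<inter> \<phi> ` U"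
      using inv_into_f_f[OF is_chartD(3)[OF c]] by auto
    show "inv_into U \<phi> -` W \<inter> \<phi> ` U \<subseteq> \<phi> ` (U \<inter> W)"
    proof
      fix y assume y: "y \<in> inv_into U \<phi> -` W \<inter> \<phi> ` U"
      then have "inv_into U \<phi> y \<in> U \<inter> W" "\<phi> (inv_into U \<phi> y) = y"
        by (auto simp: inv_into_into f_inv_into_f)
      then show "y \<in> \<phi> ` (U \<inter> W)" by (metis image_eqI)
    qed
  qed
  then show ?thesis
    using continuous_on_open_vimage[OF is_chartD(2)[OF c], THEN iffD1, OF is_chartD(5)[OF c]] \<open>open W\<close>
    by simp
qed

lemma chart_isCont: "is_chart (U, \<phi>) \<Longrightarrow> m \<in> U \<Longrightarrow> isCont \<phi> m"
  using continuous_on_eq_continuous_at[OF is_chartD(1)] is_chartD(4) by blast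

lemma chart_inv_into_image: "is_chart (U, \<phi>) \<Longrightarrow> m \<in> U \<Longrightarrow> inv_into U \<phi> (\<phi> m) = m"
  by (rule inv_into_f_f[OF is_chartD(3)])

lemma chart_filterlim_at_within:
  fixes \<phi> :: "'m::t2_space \<Rightarrow> 'e::banach"
  assumes c: "is_chart (U, \<phi>)" and "open W" "W \<subseteq> U" "m0 \<in> W"
  shows "filterlim \<phi> (at (\<phi> m0) within \<phi> ` (W \<inter> A)) (at m0 within A)"
  unfolding filterlim_at
proof
  show "(\<phi> \<longlongrightarrow> \<phi> m0) (at m0 within A)"
    using chart_isCont[OF c, of m0] assms(3,4) by (auto intro: tendsto_at_within_of_isCont)
  show "\<forall>\<^sub>F m in at m0 within A. \<phi> m \<in> \<phi> ` (W \<inter> A) \<and> \<phi> m \<noteq> \<phi> m0"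
    using eventually_nhds_in_open[OF \<open>open W\<close> \<open>m0 \<in> W\<close>] unfolding eventually_at_filter
    by (rule eventually_mono) (use assms(3,4) inj_on_eq_iff[OF is_chartD(3)[OF c]] in auto)
qed

lemma banach_manifold_chart_at:
  assumes "banach_manifold A"
  obtains U \<phi> where "(U, \<phi>) \<in> A" "x \<in> U"
proof -
  obtain c where "c \<in> A" "x \<in> fst c" using assms unfolding banach_manifold_def by blast
  then show ?thesis using that by (cases c) auto
qed

lemma banach_manifold_is_chart: "banach_manifold A \<Longrightarrow> c \<in> A \<Longrightarrow> is_chart c"
  unfolding banach_manifold_def by blast

lemma banach_manifold_chart_of: "banach_manifold A \<Longrightarrow> c \<in> A \<Longrightarrow> chart_of A c"
  unfolding banach_manifold_def chart_of_def by blast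

lemma chart_of_is_chart: "chart_of A c \<Longrightarrow> is_chart c"
  unfolding chart_of_def by blast

lemma chart_of_transition_smooth:
  assumes "chart_of A (U, \<phi>)" "(V, \<psi>) \<in> A"
  shows "smooth_on (\<phi> ` (U \<inter> V)) (\<psi> \<circ> inv_into U \<phi>)"
    and "smooth_on (\<psi> ` (U \<inter> V)) (\<phi> \<circ> inv_into V \<psi>)"
proof -
  have "smooth_compat (U, \<phi>) (V, \<psi>)" using assms unfolding chart_of_def by blast
  then show "smooth_on (\<phi> ` (U \<inter> V)) (\<psi> \<circ> inv_into U \<phi>)" "smooth_on (\<psi> ` (U \<inter> V)) (\<phi> \<circ> inv_into V \<psi>)"
    unfolding smooth_compat_def by simp_all
qed

lemma C1_map_local_rep:
  "C1_map A B f \<Longrightarrow> (U, \<phi>) \<in> A \<Longrightarrow> (V, \<psi>) \<in> B \<Longrightarrow> C1_on (\<phi> ` (U \<inter> f -` V)) (\<psi> \<circ> f \<circ> inv_into U \<phi>)"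
  unfolding C1_map_def by fastforce

lemma C1_map_isCont: "C1_map A B f \<Longrightarrow> isCont f x"
  unfolding C1_map_def using continuous_on_eq_continuous_at[OF open_UNIV] by blast

lemma C1_map_open_vimage: "C1_map A B f \<Longrightarrow> open V \<Longrightarrow> open (f -` V)"
  unfolding C1_map_def using continuous_on_open_vimage[OF open_UNIV] by auto

lemma smooth_fun_C1_on:
  "smooth_fun A h \<Longrightarrow> (U, \<phi>) \<in> A \<Longrightarrow> C1_on (\<phi> ` U) (h \<circ> inv_into U \<phi>)"
  unfolding smooth_fun_def by (fastforce intro: smooth_on_imp_C1_on)

lemma regular_value0D:
  "regular_value0 A h \<Longrightarrow> h m = 0 \<Longrightarrow> (U, \<phi>) \<in> A \<Longrightarrow> m \<in> U \<Longrightarrow>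
    frechet_derivative (h \<circ> inv_into U \<phi>) (at (\<phi> m)) \<noteq> (\<lambda>_. 0)"
  unfolding regular_value0_def by fastforce

lemma C1_map_id:
  assumes "banach_manifold A"
  shows "C1_map A A id"
  unfolding C1_map_def
proof (intro conjI continuous_on_id' ballI, clarify)
  fix U \<phi> V \<psi> assume "(U, \<phi>) \<in> A" "(V, \<psi>) \<in> A"
  then have "smooth_compat (U, \<phi>) (V, \<psi>)" using assms unfolding banach_manifold_def by blast
  then show "C1_on (\<phi> ` (U \<inter> id -` V)) (\<psi> \<circ> id \<circ> inv_into U \<phi>)"
    unfolding smooth_compat_def by (simp add: smooth_on_imp_C1_on)
qed

lemma C1_map_chart_of:
  assumes "banach_manifold A" "banach_manifold B" and f: "C1_map A B f"
    and \<mu>: "chart_of A (V, \<mu>)" and \<psi>: "chart_of B (W, \<psi>)"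
  shows "C1_on (\<mu> ` (V \<inter> f -` W)) (\<psi> \<circ> f \<circ> inv_into V \<mu>)"
proof (rule C1_on_local)
  note \<mu>c = chart_of_is_chart[OF \<mu>] and \<psi>c = chart_of_is_chart[OF \<psi>]
  show "open (\<mu> ` (V \<inter> f -` W))"
    using chart_open_image[OF \<mu>c C1_map_open_vimage[OF f is_chartD(1)[OF \<psi>c]]] .
  fix y assume "y \<in> \<mu> ` (V \<inter> f -` W)"
  then obtain n where n: "n \<in> V" "f n \<in> W" "y = \<mu> n" by blast
  obtain Vb \<nu> where \<nu>: "(Vb, \<nu>) \<in> A" "n \<in> Vb" using banach_manifold_chart_at[OF assms(1)] .
  obtain Wb \<psi>b where \<psi>b: "(Wb, \<psi>b) \<in> B" "f n \<in> Wb" using banach_manifold_chart_at[OF assms(2)] .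
  note \<nu>c = banach_manifold_is_chart[OF assms(1) \<nu>(1)] and \<psi>bc = banach_manifold_is_chart[OF assms(2) \<psi>b(1)]
  define T where "T = \<mu> ` (V \<inter> (Vb \<inter> f -` (W \<inter> Wb)))"
  have "open T"
    unfolding T_def using is_chartD(1)[OF \<nu>c] is_chartD(1)[OF \<psi>c] is_chartD(1)[OF \<psi>bc]
    by (intro chart_open_image[OF \<mu>c] open_Int C1_map_open_vimage[OF f]) auto
  have \<tau>1: "C1_on T (\<nu> \<circ> inv_into V \<mu>)"
    using smooth_on_imp_C1_on[OF chart_of_transition_smooth(1)[OF \<mu> \<nu>(1)]] \<open>open T\<close>
    by (rule C1_on_subset) (auto simp: T_def)
  have G: "C1_on (\<nu> ` (Vb \<inter> f -` Wb)) (\<psi>b \<circ> f \<circ> inv_into Vb \<nu>)"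
    by (rule C1_map_local_rep[OF f \<nu>(1) \<psi>b(1)])
  have \<tau>2: "C1_on (\<psi>b ` (W \<inter> Wb)) (\<psi> \<circ> inv_into Wb \<psi>b)"
    by (rule smooth_on_imp_C1_on[OF chart_of_transition_smooth(2)[OF \<psi> \<psi>b(1)]])
  have "C1_on T ((\<psi> \<circ> inv_into Wb \<psi>b) \<circ> ((\<psi>b \<circ> f \<circ> inv_into Vb \<nu>) \<circ> (\<nu> \<circ> inv_into V \<mu>)))"
    using chart_inv_into_image[OF \<mu>c] chart_inv_into_image[OF \<nu>c]
    by (intro C1_on_compose[OF C1_on_compose[OF \<tau>1 G] \<tau>2]) (auto simp: T_def)
  then have "C1_on T (\<psi> \<circ> f \<circ> inv_into V \<mu>)"
    by (rule C1_on_cong)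
      (auto simp: T_def chart_inv_into_image[OF \<mu>c] chart_inv_into_image[OF \<nu>c] chart_inv_into_image[OF \<psi>bc])
  moreover have "y \<in> T" unfolding T_def using n \<nu>(2) \<psi>b(2) by blast
  ultimately show "\<exists>T. open T \<and> y \<in> T \<and> C1_on T (\<psi> \<circ> f \<circ> inv_into V \<mu>)"
    using \<open>open T\<close> by blast
qed

lemma C1_map_smooth_fun_C1_on:
  assumes "banach_manifold A" "banach_manifold B" and f: "C1_map A B f" and h: "smooth_fun B h"
    and U: "(U, \<phi>) \<in> A" and V: "(V, \<nu>) \<in> B"
  shows "C1_on (\<phi> ` (U \<inter> f -` V)) (h \<circ> f \<circ> inv_into U \<phi>)"
proof -
  note \<phi>c = banach_manifold_is_chart[OF assms(1) U] and \<nu>c = banach_manifold_is_chart[OF assms(2) V]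
  have "C1_on (\<phi> ` (U \<inter> f -` V)) ((h \<circ> inv_into V \<nu>) \<circ> (\<nu> \<circ> f \<circ> inv_into U \<phi>))"
    using chart_inv_into_image[OF \<phi>c]
    by (intro C1_on_compose[OF C1_map_local_rep[OF f U V] smooth_fun_C1_on[OF h V]]) auto
  then show ?thesis
    by (rule C1_on_cong) (auto simp: chart_inv_into_image[OF \<phi>c] chart_inv_into_image[OF \<nu>c])
qed

lemma C1_map_difference_quotient_tendsto:
  assumes "banach_manifold A" "banach_manifold B" and f: "C1_map A B f"
    and \<mu>: "chart_of A (V, \<mu>)" and \<psi>: "chart_of B (W, \<psi>)" and "n0 \<in> V" "f n0 \<in> W"
    and a: "(a \<longlongrightarrow> n0) F" and b: "(b \<longlongrightarrow> n0) F"
    and quot: "((\<lambda>x. (1 / s x) *\<^sub>R (\<mu> (b x) - \<mu> (a x))) \<longlongrightarrow> v) F"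
  shows "((\<lambda>x. (1 / s x) *\<^sub>R (\<psi> (f (b x)) - \<psi> (f (a x))))
           \<longlongrightarrow> frechet_derivative (\<psi> \<circ> f \<circ> inv_into V \<mu>) (at (\<mu> n0)) v) F"
proof -
  note \<mu>c = chart_of_is_chart[OF \<mu>]
  have "open (V \<inter> f -` W)"
    using is_chartD(1)[OF \<mu>c] C1_map_open_vimage[OF f is_chartD(1)[OF chart_of_is_chart[OF \<psi>]]] by blast
  have n0: "n0 \<in> V \<inter> f -` W" using \<open>n0 \<in> V\<close> \<open>f n0 \<in> W\<close> by blast
  have "((\<lambda>x. (1 / s x) *\<^sub>R ((\<psi> \<circ> f \<circ> inv_into V \<mu>) (\<mu> (b x)) - (\<psi> \<circ> f \<circ> inv_into V \<mu>) (\<mu> (a x))))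
      \<longlongrightarrow> frechet_derivative (\<psi> \<circ> f \<circ> inv_into V \<mu>) (at (\<mu> n0)) v) F"
    using C1_on_difference_quotient_tendsto[OF C1_map_chart_of[OF assms(1-3) \<mu> \<psi>] imageI[OF n0]
        isCont_tendsto_compose[OF chart_isCont[OF \<mu>c \<open>n0 \<in> V\<close>] a]
        isCont_tendsto_compose[OF chart_isCont[OF \<mu>c \<open>n0 \<in> V\<close>] b] quot] .
  moreover have "\<forall>\<^sub>F x in F. a x \<in> V \<inter> f -` W \<and> b x \<in> V \<inter> f -` W"
    using topological_tendstoD[OF a \<open>open (V \<inter> f -` W)\<close> n0] topological_tendstoD[OF b \<open>open (V \<inter> f -` W)\<close> n0]
    by (rule eventually_conj)
  ultimately show ?thesis
    by (rule Lim_transform_eventually[OF _ eventually_mono]) (auto simp: chart_inv_into_image[OF \<mu>c])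
qed

lemma at_within_nonzero_neq_bot:
  assumes A: "banach_manifold A" and "smooth_fun A h" "regular_value0 A h" and "h m0 = 0"
  shows "at m0 within {m. h m \<noteq> 0} \<noteq> bot"
proof
  assume "at m0 within {m. h m \<noteq> 0} = bot"
  then obtain W where "open W" "m0 \<in> W" and W: "\<forall>m\<in>W. h m = 0"
    using \<open>h m0 = 0\<close> unfolding trivial_limit_within islimpt_def by auto
  obtain U \<phi> where c: "(U, \<phi>) \<in> A" "m0 \<in> U" using banach_manifold_chart_at[OF A] .
  note chart = banach_manifold_is_chart[OF A c(1)]
  have "((h \<circ> inv_into U \<phi>) has_derivative (\<lambda>_. 0)) (at (\<phi> m0))"
  proof (rule has_derivative_transform_within_open[OF has_derivative_const])
    show "open (\<phi> ` (U \<inter> W))" by (rule chart_open_image[OF chart \<open>open W\<close>])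
    show "\<phi> m0 \<in> \<phi> ` (U \<inter> W)" using c(2) \<open>m0 \<in> W\<close> by blast
    show "0 = (h \<circ> inv_into U \<phi>) y" if "y \<in> \<phi> ` (U \<inter> W)" for y
      using that W by (auto simp: chart_inv_into_image[OF chart])
  qed
  then show False
    using regular_value0D[OF assms(3,4) c] frechet_derivative_at by metis
qed

lemma O_repD:
  assumes "O_rep h r (V, \<psi>) f2 f1 m0 \<delta>"
  shows "\<forall>\<^sub>F m in nhds m0. f1 m \<in> V \<and> f2 m \<in> V \<and> \<psi> (f2 m) - \<psi> (f1 m) = h m ^ r *\<^sub>R \<delta> m"
    and "isCont \<delta> m0"
  using assms unfolding O_rep_def eventually_nhds by auto

lemma O_rep_quotient_tendsto:
  assumes "O_rep h r (V, \<psi>) f2 f1 m0 \<delta>"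
  shows "((\<lambda>m. (1 / h m ^ r) *\<^sub>R (\<psi> (f2 m) - \<psi> (f1 m))) \<longlongrightarrow> \<delta> m0) (at m0 within {m. h m \<noteq> 0})"
proof (rule Lim_transform_eventually)
  show "(\<delta> \<longlongrightarrow> \<delta> m0) (at m0 within {m. h m \<noteq> 0})"
    using O_repD(2)[OF assms] continuous_at tendsto_within_subset by blast
  show "\<forall>\<^sub>F m in at m0 within {m. h m \<noteq> 0}. \<delta> m = (1 / h m ^ r) *\<^sub>R (\<psi> (f2 m) - \<psi> (f1 m))"
    unfolding eventually_at_filter by (rule eventually_mono[OF O_repD(1)[OF assms]]) auto
qed

lemma O_rep_of_quotient_tendsto:
  assumes "r \<ge> 1" "h m0 = 0"
    and ev: "\<forall>\<^sub>F m in nhds m0. f1 m \<in> V \<and> f2 m \<in> V \<and> (h m = 0 \<longrightarrow> \<psi> (f2 m) = \<psi> (f1 m))"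
    and lim: "((\<lambda>m. (1 / h m ^ r) *\<^sub>R (\<psi> (f2 m) - \<psi> (f1 m))) \<longlongrightarrow> v) (at m0 within {m. h m \<noteq> 0})"
  shows "O_rep h r (V, \<psi>) f2 f1 m0 (\<lambda>m. if h m = 0 then v else (1 / h m ^ r) *\<^sub>R (\<psi> (f2 m) - \<psi> (f1 m)))"
proof -
  define \<delta> where "\<delta> m = (if h m = 0 then v else (1 / h m ^ r) *\<^sub>R (\<psi> (f2 m) - \<psi> (f1 m)))" for m
  have "(\<delta> \<longlongrightarrow> v) (at m0 within {m. h m \<noteq> 0})"
    by (rule Lim_transform_eventually[OF lim]) (simp add: eventually_at_filter \<delta>_def)
  moreover have "(\<delta> \<longlongrightarrow> v) (at m0 within {m. h m = 0})"
    by (rule Lim_transform_eventually[OF tendsto_const]) (simp add: eventually_at_filter \<delta>_def)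
  ultimately have "(\<delta> \<longlongrightarrow> v) (at m0)"
    using Lim_within_Un[of \<delta> v m0 "{m. h m \<noteq> 0}" "{m. h m = 0}"] by (simp add: Un_def)
  then have "isCont \<delta> m0" unfolding continuous_at \<delta>_def using \<open>h m0 = 0\<close> by simp
  moreover obtain W where "open W" "m0 \<in> W"
    and W: "\<forall>m\<in>W. f1 m \<in> V \<and> f2 m \<in> V \<and> (h m = 0 \<longrightarrow> \<psi> (f2 m) = \<psi> (f1 m))"
    using ev unfolding eventually_nhds by blast
  moreover have "\<psi> (f2 m) - \<psi> (f1 m) = h m ^ r *\<^sub>R \<delta> m" if "m \<in> W" for m
    using W that \<open>r \<ge> 1\<close> by (cases "h m = 0") (auto simp: \<delta>_def power_0_left)
  ultimately show ?thesis unfolding O_rep_def \<delta>_def[symmetric] by auto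
qed

lemma res_rep_eqI:
  assumes "at m0 within {m. h m \<noteq> 0} \<noteq> bot" and O: "O_rep h r (V, \<psi>) f2 f1 m0 \<delta>"
  shows "res_rep h r (V, \<psi>) f2 f1 m0 = \<delta> m0"
  unfolding res_rep_def
proof (rule the_equality)
  show "\<exists>\<delta>'. O_rep h r (V, \<psi>) f2 f1 m0 \<delta>' \<and> \<delta>' m0 = \<delta> m0" using O by blast
  fix w assume "\<exists>\<delta>'. O_rep h r (V, \<psi>) f2 f1 m0 \<delta>' \<and> \<delta>' m0 = w"
  then obtain \<delta>' where O': "O_rep h r (V, \<psi>) f2 f1 m0 \<delta>'" "\<delta>' m0 = w" by blast
  show "w = \<delta> m0"
    using tendsto_unique[OF assms(1) O_rep_quotient_tendsto[OF O'(1)] O_rep_quotient_tendsto[OF O]] O'(2) by simp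
qed

lemma bigO_O_rep_chart_of:
  assumes B: "banach_manifold B" and "r \<ge> 1" and O: "bigO h r B f2 f1"
    and "isCont f1 m0" "isCont f2 m0" and "h m0 = 0"
    and \<mu>: "chart_of B (V, \<mu>)" and "f1 m0 \<in> V"
  shows "\<exists>\<delta>. O_rep h r (V, \<mu>) f2 f1 m0 \<delta>"
proof -
  have eq: "\<And>m. h m = 0 \<Longrightarrow> f2 m = f1 m" using O unfolding bigO_def by blast
  obtain c \<delta>0 where "chart_of B c" "f1 m0 \<in> fst c" "O_rep h r c f2 f1 m0 \<delta>0"
    using O \<open>h m0 = 0\<close> unfolding bigO_def by blast
  moreover obtain V0 \<mu>0 where "c = (V0, \<mu>0)" by (cases c)
  ultimately have \<mu>0: "chart_of B (V0, \<mu>0)" "f1 m0 \<in> V0" and O0: "O_rep h r (V0, \<mu>0) f2 f1 m0 \<delta>0"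
    by auto
  have f1: "(f1 \<longlongrightarrow> f1 m0) (at m0 within {m. h m \<noteq> 0})"
    and f2: "(f2 \<longlongrightarrow> f1 m0) (at m0 within {m. h m \<noteq> 0})"
    using assms(4,5) eq[OF \<open>h m0 = 0\<close>] by (auto intro: tendsto_at_within_of_isCont)
  have lim: "((\<lambda>m. (1 / h m ^ r) *\<^sub>R (\<mu> (id (f2 m)) - \<mu> (id (f1 m))))
      \<longlongrightarrow> frechet_derivative (\<mu> \<circ> id \<circ> inv_into V0 \<mu>0) (at (\<mu>0 (f1 m0))) (\<delta>0 m0))
      (at m0 within {m. h m \<noteq> 0})"
    using \<open>f1 m0 \<in> V\<close> by (intro C1_map_difference_quotient_tendsto[OF B B C1_map_id[OF B] \<mu>0(1) \<mu> \<mu>0(2) _ f1 f2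
        O_rep_quotient_tendsto[OF O0]]) auto
  have ev: "\<forall>\<^sub>F m in nhds m0. f1 m \<in> V \<and> f2 m \<in> V \<and> (h m = 0 \<longrightarrow> \<mu> (f2 m) = \<mu> (f1 m))"
  proof -
    have "open V" using is_chartD(1)[OF chart_of_is_chart[OF \<mu>]] .
    then have "\<forall>\<^sub>F m in nhds m0. f1 m \<in> V" "\<forall>\<^sub>F m in nhds m0. f2 m \<in> V"
      using \<open>f1 m0 \<in> V\<close> eq[OF \<open>h m0 = 0\<close>] assms(4,5) by (auto intro: isCont_eventually_in_open)
    then show ?thesis by eventually_elim (simp add: eq)
  qed
  show ?thesis
    using O_rep_of_quotient_tendsto[where h = h, OF \<open>r \<ge> 1\<close> \<open>h m0 = 0\<close> ev lim[simplified]] by blast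
qed

lemma O_rep_pullback_quotient_tendsto:
  assumes O: "O_rep hN r (W, \<psi>) g2 g1 n0 \<delta>" and "isCont f m0" "f m0 = n0"
    and ratio: "((\<lambda>m. hN (f m) / hM m) \<longlongrightarrow> c) (at m0 within {m. hM m \<noteq> 0})"
  shows "((\<lambda>m. (1 / hM m ^ r) *\<^sub>R (\<psi> (g2 (f m)) - \<psi> (g1 (f m)))) \<longlongrightarrow> c ^ r *\<^sub>R \<delta> n0)
    (at m0 within {m. hM m \<noteq> 0})"
proof (rule Lim_transform_eventually)
  have "(f \<longlongrightarrow> n0) (at m0 within {m. hM m \<noteq> 0})"
    by (rule tendsto_at_within_of_isCont) fact+
  with ratio show "((\<lambda>m. (hN (f m) / hM m) ^ r *\<^sub>R \<delta> (f m)) \<longlongrightarrow> c ^ r *\<^sub>R \<delta> n0) (at m0 within {m. hM m \<noteq> 0})"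
    using O_repD(2)[OF O] by (intro tendsto_intros isCont_tendsto_compose[of n0 \<delta>])
  have "\<forall>\<^sub>F n in nhds (f m0). \<psi> (g2 n) - \<psi> (g1 n) = hN n ^ r *\<^sub>R \<delta> n"
    using O_repD(1)[OF O] \<open>f m0 = n0\<close> by (auto elim: eventually_mono)
  from isCont_eventually_nhds[OF \<open>isCont f m0\<close> this]
  show "\<forall>\<^sub>F m in at m0 within {m. hM m \<noteq> 0}.
      (hN (f m) / hM m) ^ r *\<^sub>R \<delta> (f m) = (1 / hM m ^ r) *\<^sub>R (\<psi> (g2 (f m)) - \<psi> (g1 (f m)))"
    unfolding eventually_at_filter by (rule eventually_mono) (simp add: power_divide)
qed

lemma chart_ratio_tendsto:
  assumes "banach_manifold AM" "banach_manifold AN" "smooth_fun AM hM" "regular_value0 AM hM"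
    and "smooth_fun AN hN" and f: "C1_map AM AN f" and zero: "\<And>m. hM m = 0 \<Longrightarrow> hN (f m) = 0"
    and "hM m0 = 0" and U: "(U, \<phi>) \<in> AM" "m0 \<in> U"
  shows "\<exists>a. ((\<lambda>m. hN (f m) / hM m) \<longlongrightarrow> a) (at m0 within {m. hM m \<noteq> 0}) \<and>
    frechet_derivative (hN \<circ> f \<circ> inv_into U \<phi>) (at (\<phi> m0)) =
      (\<lambda>w. a * frechet_derivative (hM \<circ> inv_into U \<phi>) (at (\<phi> m0)) w)"
proof -
  note \<phi>c = banach_manifold_is_chart[OF assms(1) U(1)]
  obtain V \<nu> where \<nu>: "(V, \<nu>) \<in> AN" "f m0 \<in> V" using banach_manifold_chart_at[OF assms(2)] .
  define W where "W = U \<inter> f -` V"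
  define H where "H = hM \<circ> inv_into U \<phi>"
  define Q where "Q = hN \<circ> f \<circ> inv_into U \<phi>"
  have "open W"
    unfolding W_def using is_chartD(1)[OF \<phi>c]
      C1_map_open_vimage[OF f is_chartD(1)[OF banach_manifold_is_chart[OF assms(2) \<nu>(1)]]] by blast
  have "U \<inter> W = W" unfolding W_def by blast
  then have "open (\<phi> ` W)" using chart_open_image[OF \<phi>c \<open>open W\<close>] by simp
  have m0: "m0 \<in> W" "\<phi> m0 \<in> \<phi> ` W" unfolding W_def using U(2) \<nu>(2) by auto
  have H_\<phi>: "H (\<phi> m) = hM m" and Q_\<phi>: "Q (\<phi> m) = hN (f m)" if "m \<in> U" for m
    using chart_inv_into_image[OF \<phi>c that] unfolding H_def Q_def by simp_all
  have nonzero: "{y \<in> \<phi> ` W. H y \<noteq> 0} = \<phi> ` (W \<inter> {m. hM m \<noteq> 0})"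
    by (auto simp: W_def H_\<phi>)
  have H: "C1_on (\<phi> ` W) H"
    using smooth_fun_C1_on[OF assms(3) U(1)] \<open>open (\<phi> ` W)\<close> unfolding H_def
    by (rule C1_on_subset) (auto simp: W_def)
  have Q: "C1_on (\<phi> ` W) Q"
    unfolding W_def Q_def by (rule C1_map_smooth_fun_C1_on[OF assms(1,2) f assms(5) U(1) \<nu>(1)])
  have "H (\<phi> m0) = 0" using H_\<phi>[OF U(2)] \<open>hM m0 = 0\<close> by simp
  have zeroS: "Q y = 0" if "y \<in> \<phi> ` W" "H y = 0" for y
    using that zero by (auto simp: W_def H_\<phi> Q_\<phi>)
  have "frechet_derivative H (at (\<phi> m0)) \<noteq> (\<lambda>_. 0)"
    unfolding H_def by (rule regular_value0D[OF assms(4,8) U])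
  then obtain a where lim: "((\<lambda>y. Q y / H y) \<longlongrightarrow> a) (at (\<phi> m0) within {y \<in> \<phi> ` W. H y \<noteq> 0})"
    using C1_on_ratio_tendsto[OF H Q m0(2) \<open>H (\<phi> m0) = 0\<close> _ zeroS] by blast
  have "(Q has_derivative (\<lambda>w. a * frechet_derivative H (at (\<phi> m0)) w)) (at (\<phi> m0))"
    by (rule has_derivative_of_ratio_tendsto[OF C1_on_has_derivative[OF H m0(2)] \<open>open (\<phi> ` W)\<close> m0(2)
          \<open>H (\<phi> m0) = 0\<close> zeroS lim])
  then have "frechet_derivative Q (at (\<phi> m0)) = (\<lambda>w. a * frechet_derivative H (at (\<phi> m0)) w)"
    by (rule frechet_derivative_at[symmetric])
  moreover have "((\<lambda>m. hN (f m) / hM m) \<longlongrightarrow> a) (at m0 within {m. hM m \<noteq> 0})"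
  proof (rule Lim_transform_eventually)
    show "((\<lambda>m. Q (\<phi> m) / H (\<phi> m)) \<longlongrightarrow> a) (at m0 within {m. hM m \<noteq> 0})"
      using filterlim_compose[OF lim[unfolded nonzero] chart_filterlim_at_within[OF \<phi>c \<open>open W\<close> _ m0(1)]]
      unfolding W_def by blast
    show "\<forall>\<^sub>F m in at m0 within {m. hM m \<noteq> 0}. Q (\<phi> m) / H (\<phi> m) = hN (f m) / hM m"
      using eventually_nhds_in_open[OF is_chartD(1)[OF \<phi>c] U(2)] unfolding eventually_at_filter
      by (rule eventually_mono) (simp add: H_\<phi> Q_\<phi>)
  qed
  ultimately show ?thesis unfolding H_def Q_def by blast
qed

lemma fdot_tendsto:
  assumes "banach_manifold AM" "banach_manifold AN" "smooth_fun AM hM" "regular_value0 AM hM"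
    and "smooth_fun AN hN" "C1_map AM AN f" "\<And>m. hM m = 0 \<Longrightarrow> hN (f m) = 0" "hM m0 = 0"
  shows "((\<lambda>m. hN (f m) / hM m) \<longlongrightarrow> fdot AM hM hN f m0) (at m0 within {m. hM m \<noteq> 0})"
proof -
  obtain U0 \<phi>0 where U0: "(U0, \<phi>0) \<in> AM" "m0 \<in> U0" using banach_manifold_chart_at[OF assms(1)] .
  obtain a where lim: "((\<lambda>m. hN (f m) / hM m) \<longlongrightarrow> a) (at m0 within {m. hM m \<noteq> 0})"
    using chart_ratio_tendsto[OF assms U0] by blast
  have deriv: "frechet_derivative (hN \<circ> f \<circ> inv_into U \<phi>) (at (\<phi> m0)) =
      (\<lambda>w. a * frechet_derivative (hM \<circ> inv_into U \<phi>) (at (\<phi> m0)) w)"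
    if U: "(U, \<phi>) \<in> AM" "m0 \<in> U" for U \<phi>
  proof -
    obtain a' where "((\<lambda>m. hN (f m) / hM m) \<longlongrightarrow> a') (at m0 within {m. hM m \<noteq> 0})"
      and "frechet_derivative (hN \<circ> f \<circ> inv_into U \<phi>) (at (\<phi> m0)) =
        (\<lambda>w. a' * frechet_derivative (hM \<circ> inv_into U \<phi>) (at (\<phi> m0)) w)"
      using chart_ratio_tendsto[OF assms U] by blast
    moreover have "a' = a"
      using tendsto_unique[OF at_within_nonzero_neq_bot[OF assms(1,3,4,8)]] lim calculation(1) by blast
    ultimately show ?thesis by simp
  qed
  have "fdot AM hM hN f m0 = a"
    unfolding fdot_def
  proof (rule the_equality)
    show "\<forall>(U, \<phi>)\<in>AM. m0 \<in> U \<longrightarrow> frechet_derivative (hN \<circ> f \<circ> inv_into U \<phi>) (at (\<phi> m0)) =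
        (\<lambda>v. a * frechet_derivative (hM \<circ> inv_into U \<phi>) (at (\<phi> m0)) v)"
      using deriv by blast
    fix a' assume "\<forall>(U, \<phi>)\<in>AM. m0 \<in> U \<longrightarrow> frechet_derivative (hN \<circ> f \<circ> inv_into U \<phi>) (at (\<phi> m0)) =
        (\<lambda>v. a' * frechet_derivative (hM \<circ> inv_into U \<phi>) (at (\<phi> m0)) v)"
    then have "(\<lambda>v. a' * frechet_derivative (hM \<circ> inv_into U0 \<phi>0) (at (\<phi>0 m0)) v)
        = (\<lambda>v. a * frechet_derivative (hM \<circ> inv_into U0 \<phi>0) (at (\<phi>0 m0)) v)"
      using deriv[OF U0] U0 by fastforce
    moreover obtain w where "frechet_derivative (hM \<circ> inv_into U0 \<phi>0) (at (\<phi>0 m0)) w \<noteq> 0"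
      using regular_value0D[OF assms(4,8) U0] by auto
    ultimately show "a' = a" by (metis mult_right_cancel)
  qed
  with lim show ?thesis by simp
qed

section \<open>Residual of a composition\<close>

lemma O_rep_compose:
  fixes AM :: "('m::t2_space set \<times> ('m \<Rightarrow> 'e::banach)) set"
    and AN :: "('n::t2_space set \<times> ('n \<Rightarrow> 'f::banach)) set"
    and AP :: "('p::t2_space set \<times> ('p \<Rightarrow> 'g::banach)) set"
    and hM :: "'m \<Rightarrow> real" and hN :: "'n \<Rightarrow> real"
    and f1 f2 :: "'m \<Rightarrow> 'n" and g1 g2 :: "'n \<Rightarrow> 'p"
  assumes M: "banach_manifold AM" and N: "banach_manifold AN" and P: "banach_manifold AP"
    and hM: "smooth_fun AM hM" "regular_value0 AM hM" and hN: "smooth_fun AN hN" "regular_value0 AN hN"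
    and "r \<ge> 1"
    and f1: "C1_map AM AN f1" and f2: "C1_map AM AN f2" and g1: "C1_map AN AP g1" and g2: "C1_map AN AP g2"
    and z1: "\<And>m. hM m = 0 \<Longrightarrow> hN (f1 m) = 0" and z2: "\<And>m. hM m = 0 \<Longrightarrow> hN (f2 m) = 0"
    and Of: "bigO hM r AN f2 f1" and Og: "bigO hN r AP g2 g1"
    and "hM m0 = 0" and \<mu>: "chart_of AN (V, \<mu>)" "f1 m0 \<in> V" and \<psi>: "chart_of AP (W, \<psi>)" "g1 (f1 m0) \<in> W"
  shows "\<exists>\<delta>. O_rep hM r (W, \<psi>) (g2 \<circ> f2) (g1 \<circ> f1) m0 \<delta> \<and>
    \<delta> m0 = fdot AM hM hN f2 m0 ^ r *\<^sub>R res_rep hN r (W, \<psi>) g2 g1 (f1 m0)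
      + frechet_derivative (\<psi> \<circ> g1 \<circ> inv_into V \<mu>) (at (\<mu> (f1 m0))) (res_rep hM r (V, \<mu>) f2 f1 m0)"
proof -
  define n0 where "n0 = f1 m0"
  define F where "F = at m0 within {m. hM m \<noteq> 0}"
  have f_eq: "\<And>m. hM m = 0 \<Longrightarrow> f2 m = f1 m" using Of unfolding bigO_def by blast
  have g_eq: "\<And>n. hN n = 0 \<Longrightarrow> g2 n = g1 n" using Og unfolding bigO_def by blast
  have "hN n0 = 0" "f2 m0 = n0" using z1 f_eq \<open>hM m0 = 0\<close> unfolding n0_def by auto
  obtain \<delta>f where \<delta>f: "O_rep hM r (V, \<mu>) f2 f1 m0 \<delta>f"
    using bigO_O_rep_chart_of[OF N \<open>r \<ge> 1\<close> Of C1_map_isCont[OF f1] C1_map_isCont[OF f2] \<open>hM m0 = 0\<close> \<mu>] by blast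
  obtain \<delta>g where \<delta>g: "O_rep hN r (W, \<psi>) g2 g1 n0 \<delta>g"
    using bigO_O_rep_chart_of[OF P \<open>r \<ge> 1\<close> Og C1_map_isCont[OF g1] C1_map_isCont[OF g2] \<open>hN n0 = 0\<close> \<psi>(1)]
      \<psi>(2) unfolding n0_def by blast
  have f1_lim: "(f1 \<longlongrightarrow> n0) F" and f2_lim: "(f2 \<longlongrightarrow> n0) F"
    unfolding F_def n0_def using \<open>f2 m0 = n0\<close>
    by (auto intro!: tendsto_at_within_of_isCont C1_map_isCont[OF f1] C1_map_isCont[OF f2] simp: n0_def)
  have lim_g1: "((\<lambda>m. (1 / hM m ^ r) *\<^sub>R (\<psi> (g1 (f2 m)) - \<psi> (g1 (f1 m))))
      \<longlongrightarrow> frechet_derivative (\<psi> \<circ> g1 \<circ> inv_into V \<mu>) (at (\<mu> n0)) (\<delta>f m0)) F"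
    using C1_map_difference_quotient_tendsto[OF N P g1 \<mu>(1) \<psi>(1) \<mu>(2) \<psi>(2) f1_lim[unfolded n0_def]
        f2_lim[unfolded n0_def] O_rep_quotient_tendsto[OF \<delta>f, folded F_def]]
    unfolding n0_def .
  have lim_g: "((\<lambda>m. (1 / hM m ^ r) *\<^sub>R (\<psi> (g2 (f2 m)) - \<psi> (g1 (f2 m))))
      \<longlongrightarrow> fdot AM hM hN f2 m0 ^ r *\<^sub>R \<delta>g n0) F"
    unfolding F_def by (rule O_rep_pullback_quotient_tendsto[OF \<delta>g C1_map_isCont[OF f2] \<open>f2 m0 = n0\<close>
        fdot_tendsto[OF M N hM hN(1) f2 z2 \<open>hM m0 = 0\<close>]])
  have "((\<lambda>m. (1 / hM m ^ r) *\<^sub>R (\<psi> ((g2 \<circ> f2) m) - \<psi> ((g1 \<circ> f1) m)))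
      \<longlongrightarrow> fdot AM hM hN f2 m0 ^ r *\<^sub>R \<delta>g n0
          + frechet_derivative (\<psi> \<circ> g1 \<circ> inv_into V \<mu>) (at (\<mu> n0)) (\<delta>f m0)) F"
    using tendsto_add[OF lim_g lim_g1] by (simp add: scaleR_diff_right algebra_simps)
  moreover have "\<forall>\<^sub>F m in nhds m0. (g1 \<circ> f1) m \<in> W \<and> (g2 \<circ> f2) m \<in> W \<and>
      (hM m = 0 \<longrightarrow> \<psi> ((g2 \<circ> f2) m) = \<psi> ((g1 \<circ> f1) m))"
  proof -
    have "isCont (\<lambda>m. g1 (f1 m)) m0" "isCont (\<lambda>m. g2 (f2 m)) m0"
      using C1_map_isCont[OF f1] C1_map_isCont[OF f2] C1_map_isCont[OF g1] C1_map_isCont[OF g2]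
      by (auto intro: isCont_o2)
    moreover have "g2 (f2 m0) = g1 n0" using g_eq[OF \<open>hN n0 = 0\<close>] \<open>f2 m0 = n0\<close> by simp
    ultimately have "\<forall>\<^sub>F m in nhds m0. g1 (f1 m) \<in> W" "\<forall>\<^sub>F m in nhds m0. g2 (f2 m) \<in> W"
      using \<psi>(2) is_chartD(1)[OF chart_of_is_chart[OF \<psi>(1)]] unfolding n0_def
      by (auto intro!: isCont_eventually_in_open)
    then show ?thesis by eventually_elim (simp add: f_eq g_eq z1)
  qed
  ultimately have "O_rep hM r (W, \<psi>) (g2 \<circ> f2) (g1 \<circ> f1) m0 (\<lambda>m. if hM m = 0
      then fdot AM hM hN f2 m0 ^ r *\<^sub>R \<delta>g n0 + frechet_derivative (\<psi> \<circ> g1 \<circ> inv_into V \<mu>) (at (\<mu> n0)) (\<delta>f m0)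
      else (1 / hM m ^ r) *\<^sub>R (\<psi> ((g2 \<circ> f2) m) - \<psi> ((g1 \<circ> f1) m)))"
    unfolding F_def by (intro O_rep_of_quotient_tendsto[where h = hM, OF \<open>r \<ge> 1\<close> \<open>hM m0 = 0\<close>])
  moreover have "res_rep hM r (V, \<mu>) f2 f1 m0 = \<delta>f m0"
    by (rule res_rep_eqI[OF at_within_nonzero_neq_bot[OF M hM \<open>hM m0 = 0\<close>] \<delta>f])
  moreover have "res_rep hN r (W, \<psi>) g2 g1 n0 = \<delta>g n0"
    by (rule res_rep_eqI[OF at_within_nonzero_neq_bot[OF N hN \<open>hN n0 = 0\<close>] \<delta>g])
  ultimately show ?thesis using \<open>hM m0 = 0\<close> unfolding n0_def by auto
qed

theorem proposition3p7:
  fixes AM :: "('m::t2_space set \<times> ('m \<Rightarrow> 'e::banach)) set"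
    and AN :: "('n::t2_space set \<times> ('n \<Rightarrow> 'f::banach)) set"
    and AP :: "('p::t2_space set \<times> ('p \<Rightarrow> 'g::banach)) set"
    and hM :: "'m \<Rightarrow> real" and hN :: "'n \<Rightarrow> real"
    and f1 f2 :: "'m \<Rightarrow> 'n" and g1 g2 :: "'n \<Rightarrow> 'p" and r :: nat
  assumes "banach_manifold AM" "banach_manifold AN" "banach_manifold AP"
    and "smooth_fun AM hM" "regular_value0 AM hM"
    and "smooth_fun AN hN" "regular_value0 AN hN"
    and "r \<ge> 1"
    and "C1_map AM AN f1" "C1_map AM AN f2" "C1_map AN AP g1" "C1_map AN AP g2"
    and "\<And>m. hM m = 0 \<Longrightarrow> hN (f1 m) = 0"
    and "\<And>m. hM m = 0 \<Longrightarrow> hN (f2 m) = 0"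
    and "bigO hM r AN f2 f1"
    and "bigO hN r AP g2 g1"
  shows "bigO hM r AP (g2 \<circ> f2) (g1 \<circ> f1) \<and>
    (\<forall>m V \<mu> W \<psi>. hM m = 0 \<longrightarrow> chart_of AN (V, \<mu>) \<longrightarrow> f1 m \<in> V \<longrightarrow>
       chart_of AP (W, \<psi>) \<longrightarrow> g1 (f1 m) \<in> W \<longrightarrow>
       res_rep hM r (W, \<psi>) (g2 \<circ> f2) (g1 \<circ> f1) m =
         (fdot AM hM hN f2 m) ^ r *\<^sub>R res_rep hN r (W, \<psi>) g2 g1 (f1 m)
         + frechet_derivative (\<psi> \<circ> g1 \<circ> inv_into V \<mu>) (at (\<mu> (f1 m)))
             (res_rep hM r (V, \<mu>) f2 f1 m))"
proof -
  have comp: "\<exists>\<delta>. O_rep hM r (W, \<psi>) (g2 \<circ> f2) (g1 \<circ> f1) m \<delta> \<and>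
      \<delta> m = fdot AM hM hN f2 m ^ r *\<^sub>R res_rep hN r (W, \<psi>) g2 g1 (f1 m)
        + frechet_derivative (\<psi> \<circ> g1 \<circ> inv_into V \<mu>) (at (\<mu> (f1 m))) (res_rep hM r (V, \<mu>) f2 f1 m)"
    if "hM m = 0" "chart_of AN (V, \<mu>)" "f1 m \<in> V" "chart_of AP (W, \<psi>)" "g1 (f1 m) \<in> W" for m V \<mu> W \<psi>
    using O_rep_compose[OF assms(1-12) _ _ assms(15,16) that] assms(13,14) by blast
  have "bigO hM r AP (g2 \<circ> f2) (g1 \<circ> f1)"
    unfolding bigO_def
  proof (intro conjI allI impI)
    fix m assume "hM m = 0"
    then show "(g2 \<circ> f2) m = (g1 \<circ> f1) m" using assms(13,15,16) unfolding bigO_def by simp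
  next
    fix m assume "hM m = 0"
    obtain V \<mu> where "(V, \<mu>) \<in> AN" "f1 m \<in> V" using banach_manifold_chart_at[OF assms(2)] .
    moreover obtain W \<psi> where "(W, \<psi>) \<in> AP" "g1 (f1 m) \<in> W" using banach_manifold_chart_at[OF assms(3)] .
    ultimately show "\<exists>c \<delta>. chart_of AP c \<and> (g1 \<circ> f1) m \<in> fst c \<and> O_rep hM r c (g2 \<circ> f2) (g1 \<circ> f1) m \<delta>"
      using comp[OF \<open>hM m = 0\<close>] banach_manifold_chart_of[OF assms(2)] banach_manifold_chart_of[OF assms(3)]
      by fastforce
  qed
  moreover have "at m within {m. hM m \<noteq> 0} \<noteq> bot" if "hM m = 0" for m
    using at_within_nonzero_neq_bot[OF assms(1,4,5) that] .
  ultimately show ?thesis using comp res_rep_eqI by metis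
qed

end
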